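(* Let $\varepsilon\in(0,1/2)$ and let $V_N=\mathbb Z/p_N\mathbb Z$ with $p_N\ge3$. The family $\mathcal Q(\varepsilon)=\{Q_\delta:\delta\in[-\varepsilon,\varepsilon]\}$ is $\frac{1+2\varepsilon}{1-2\varepsilon}$-stable with respect to any probability measure $\mu_0\in\mathcal S_N(\varepsilon)$.
   Context: $Q$ is the simple random walk kernel on $V_N=\mathbb Z/p_N\mathbb Z$: $Q(x,y)=1/2$ if $y=x\pm1$ and $0$ otherwise. For $\delta\in(-1/2,1/2)$, $Q_\delta=Q+\Delta_\delta$ where $\Delta_\delta(0,1)=\delta$, $\Delta_\delta(0,-1)=-\delta$ and $\Delta_\delta(x,y)=0$ otherwise. $\mathcal S_N(\varepsilon)$ is the set of probability measures $\mu$ on $V_N$ of the form $\mu(x)=1/p_N+a_{\mu,x}$ with $a_{\mu,x}=-a_{\mu,-x}$ and $|a_{\mu,x}|\le2\varepsilon/p_N$ for all $x\in V_N$. A family $\mathcal Q$ of Markov kernels is $c$-stable with respect to $\mu_0$ if for every sequence $(K_i)_{i\ge1}$ with all $K_i\in\mathcal Q$, setting $\mu_n=\mu_0K_1\cdots K_n$, one has $c^{-1}\le\mu_n(x)/\mu_0(x)\le c$ for all $n\ge0$, $x$. *)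

theory Defs
  imports Complex_Main
begin

text \<open>The vertex set V_N = Z/pZ is represented by the naturals {0..<p},
  with arithmetic modulo p. Markov kernels and measures are real-valued
  functions; only their values on {0..<p} matter.\<close>

type_synonym kernel = "nat \<Rightarrow> nat \<Rightarrow> real"
type_synonym measure_fn = "nat \<Rightarrow> real"

definition succ_mod :: "nat \<Rightarrow> nat \<Rightarrow> nat" where
  "succ_mod p x = (x + 1) mod p"

definition pred_mod :: "nat \<Rightarrow> nat \<Rightarrow> nat" where
  "pred_mod p x = (x + p - 1) mod p"

definition neg_mod :: "nat \<Rightarrow> nat \<Rightarrow> nat" where
  "neg_mod p x = (p - x) mod p"

definition Q_srw :: "nat \<Rightarrow> kernel" where
  "Q_srw p x y = (if y = succ_mod p x \<or> y = pred_mod p x then 1/2 else 0)"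

definition Delta :: "nat \<Rightarrow> real \<Rightarrow> kernel" where
  "Delta p \<delta> x y =
     (if x = 0 \<and> y = succ_mod p 0 then \<delta> else 0)
   + (if x = 0 \<and> y = pred_mod p 0 then - \<delta> else 0)"

definition Q_delta :: "nat \<Rightarrow> real \<Rightarrow> kernel" where
  "Q_delta p \<delta> x y = Q_srw p x y + Delta p \<delta> x y"

definition Qfam :: "nat \<Rightarrow> real \<Rightarrow> kernel set" where
  "Qfam p \<epsilon> = {Q_delta p \<delta> | \<delta>. \<delta> \<in> {-\<epsilon>..\<epsilon>}}"

definition act :: "nat \<Rightarrow> measure_fn \<Rightarrow> kernel \<Rightarrow> measure_fn" where
  "act p \<mu> K y = (\<Sum>x<p. \<mu> x * K x y)"

fun evol :: "nat \<Rightarrow> measure_fn \<Rightarrow> (nat \<Rightarrow> kernel) \<Rightarrow> nat \<Rightarrow> measure_fn" where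
  "evol p \<mu>0 Ks 0 = \<mu>0"
| "evol p \<mu>0 Ks (Suc n) = act p (evol p \<mu>0 Ks n) (Ks (Suc n))"

definition prob_measure_on :: "nat \<Rightarrow> measure_fn \<Rightarrow> bool" where
  "prob_measure_on p \<mu> \<longleftrightarrow> (\<forall>x<p. 0 \<le> \<mu> x) \<and> (\<Sum>x<p. \<mu> x) = 1"

definition S_N :: "nat \<Rightarrow> real \<Rightarrow> measure_fn set" where
  "S_N p \<epsilon> = {\<mu>. prob_measure_on p \<mu> \<and>
      (\<forall>x<p. \<mu> x - 1 / real p = - (\<mu> (neg_mod p x) - 1 / real p)) \<and>
      (\<forall>x<p. \<bar>\<mu> x - 1 / real p\<bar> \<le> 2 * \<epsilon> / real p)}"

definition stable :: "nat \<Rightarrow> real \<Rightarrow> kernel set \<Rightarrow> measure_fn \<Rightarrow> bool" where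
  "stable p c Qs \<mu>0 \<longleftrightarrow>
     (\<forall>Ks. (\<forall>i\<ge>1. Ks i \<in> Qs) \<longrightarrow>
        (\<forall>n x. x < p \<longrightarrow> 1 / c \<le> evol p \<mu>0 Ks n x / \<mu>0 x
                        \<and> evol p \<mu>0 Ks n x / \<mu>0 x \<le> c))"

end

theory Submission
  imports Defs
begin

text \<open>Write \<open>\<mu> = 1/p + a\<close>. Antisymmetry \<open>a(x) = -a(-x)\<close> forces \<open>a(0) = 0\<close>, so
  \<open>\<mu>(0) = 1/p\<close> and one step of \<open>Q\<^sub>\<delta>\<close> gives \<open>a'(y) = (a(y-1) + a(y+1))/2\<close> plus \<open>\<delta>/p\<close> at
  \<open>y = 1\<close> and \<open>-\<delta>/p\<close> at \<open>y = -1\<close>. This \<open>a'\<close> is again antisymmetric, and the bound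
  \<open>|a| \<le> 2\<epsilon>/p\<close> survives: at \<open>y = \<plusminus>1\<close> one of the two neighbours is \<open>0\<close>, whose
  deviation vanishes, leaving room for the perturbation \<open>|\<delta>|/p \<le> \<epsilon>/p\<close>. Hence every
  \<open>\<mu>\<^sub>n\<close> takes values in \<open>[(1-2\<epsilon>)/p, (1+2\<epsilon>)/p]\<close>, which bounds \<open>\<mu>\<^sub>n(x)/\<mu>\<^sub>0(x)\<close>.\<close>

lemma succ_mod_eq: "x < p \<Longrightarrow> succ_mod p x = (if x = p - 1 then 0 else x + 1)"
  unfolding succ_mod_def by (auto simp: mod_if)

lemma pred_mod_eq: "x < p \<Longrightarrow> pred_mod p x = (if x = 0 then p - 1 else x - 1)"
  unfolding pred_mod_def by (cases "x = 0") (auto simp: mod_if)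

lemma neg_mod_eq: "x < p \<Longrightarrow> neg_mod p x = (if x = 0 then 0 else p - x)"
  unfolding neg_mod_def by (auto simp: mod_if)

lemma pred_mod_neg_mod: "y < p \<Longrightarrow> pred_mod p (neg_mod p y) = neg_mod p (succ_mod p y)"
  by (simp add: neg_mod_eq pred_mod_eq succ_mod_eq)

lemma succ_mod_neg_mod: "y < p \<Longrightarrow> succ_mod p (neg_mod p y) = neg_mod p (pred_mod p y)"
  by (simp add: neg_mod_eq pred_mod_eq succ_mod_eq; arith)

lemma succ_mod_eq_iff: "x < p \<Longrightarrow> y < p \<Longrightarrow> succ_mod p x = y \<longleftrightarrow> x = pred_mod p y"
  by (auto simp: succ_mod_eq pred_mod_eq)

lemma pred_mod_eq_iff: "x < p \<Longrightarrow> y < p \<Longrightarrow> pred_mod p x = y \<longleftrightarrow> x = succ_mod p y"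
  by (auto simp: succ_mod_eq pred_mod_eq)

lemma pred_mod_neq_succ_mod: "y < p \<Longrightarrow> p \<ge> 3 \<Longrightarrow> pred_mod p y \<noteq> succ_mod p y"
  by (auto simp: succ_mod_eq pred_mod_eq)

lemma Q_srw_eq:
  assumes "x < p" "y < p" "p \<ge> 3"
  shows "Q_srw p x y =
    (if x = pred_mod p y then 1/2 else 0) + (if x = succ_mod p y then 1/2 else 0)"
  using assms pred_mod_neq_succ_mod[of y p]
  unfolding Q_srw_def by (auto simp: succ_mod_eq_iff pred_mod_eq_iff eq_commute[of y])

lemma act_Q_srw:
  assumes "y < p" "p \<ge> 3"
  shows "act p \<mu> (Q_srw p) y = (\<mu> (pred_mod p y) + \<mu> (succ_mod p y)) / 2"
proof -
  have "act p \<mu> (Q_srw p) y = (\<Sum>x<p. (if x = pred_mod p y then \<mu> x / 2 else 0)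
                                    + (if x = succ_mod p y then \<mu> x / 2 else 0))"
    unfolding act_def by (rule sum.cong) (use assms in \<open>auto simp: Q_srw_eq\<close>)
  also have "\<dots> = \<mu> (pred_mod p y) / 2 + \<mu> (succ_mod p y) / 2"
    using assms by (simp add: sum.distrib pred_mod_def succ_mod_def)
  finally show ?thesis by simp
qed

lemma act_Delta:
  assumes "1 < p"
  shows "act p \<mu> (Delta p \<delta>) y =
    \<mu> 0 * ((if y = 1 then \<delta> else 0) - (if y = p - 1 then \<delta> else 0))"
proof -
  have "act p \<mu> (Delta p \<delta>) y = (\<Sum>x<p. if x = 0
          then \<mu> 0 * ((if y = 1 then \<delta> else 0) - (if y = p - 1 then \<delta> else 0)) else 0)"
    unfolding act_def
    by (rule sum.cong) (use assms in \<open>auto simp: Delta_def succ_mod_eq pred_mod_eq\<close>)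
  then show ?thesis using assms by simp
qed

lemma act_Q_delta:
  assumes "y < p" "p \<ge> 3"
  shows "act p \<mu> (Q_delta p \<delta>) y = (\<mu> (pred_mod p y) + \<mu> (succ_mod p y)) / 2
     + \<mu> 0 * ((if y = 1 then \<delta> else 0) - (if y = p - 1 then \<delta> else 0))"
proof -
  have "act p \<mu> (Q_delta p \<delta>) y = act p \<mu> (Q_srw p) y + act p \<mu> (Delta p \<delta>) y"
    unfolding act_def Q_delta_def by (simp add: distrib_left sum.distrib)
  then show ?thesis using act_Q_srw[OF assms] act_Delta[of p] assms(2) by simp
qed

definition antisymmetric_about_uniform :: "nat \<Rightarrow> measure_fn \<Rightarrow> bool" where
  "antisymmetric_about_uniform p \<mu> \<longleftrightarrow>
     (\<forall>x<p. \<mu> x - 1 / real p = - (\<mu> (neg_mod p x) - 1 / real p))"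

definition deviation_bounded :: "nat \<Rightarrow> real \<Rightarrow> measure_fn \<Rightarrow> bool" where
  "deviation_bounded p \<epsilon> \<mu> \<longleftrightarrow> (\<forall>x<p. \<bar>\<mu> x - 1 / real p\<bar> \<le> 2 * \<epsilon> / real p)"

lemma S_N_iff:
  "\<mu> \<in> S_N p \<epsilon> \<longleftrightarrow>
     prob_measure_on p \<mu> \<and> antisymmetric_about_uniform p \<mu> \<and> deviation_bounded p \<epsilon> \<mu>"
  unfolding S_N_def antisymmetric_about_uniform_def deviation_bounded_def by simp

lemma antisymmetric_about_uniform_at_0:
  assumes "antisymmetric_about_uniform p \<mu>" "p > 0"
  shows "\<mu> 0 = 1 / real p"
proof -
  have "\<mu> 0 - 1 / real p = - (\<mu> (neg_mod p 0) - 1 / real p)"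
    using assms unfolding antisymmetric_about_uniform_def by blast
  then show ?thesis by (simp add: neg_mod_def)
qed

lemma act_Q_delta_antisymmetric:
  assumes anti: "antisymmetric_about_uniform p \<mu>" and p: "p \<ge> 3"
  shows "antisymmetric_about_uniform p (act p \<mu> (Q_delta p \<delta>))"
  unfolding antisymmetric_about_uniform_def
proof (intro allI impI)
  fix y assume y: "y < p"
  define c where "c = 1 / real p"
  have ny: "neg_mod p y < p" and nb: "succ_mod p y < p" "pred_mod p y < p"
    using y p by (auto simp: neg_mod_eq succ_mod_eq pred_mod_eq)
  have reflect: "\<mu> (neg_mod p z) = 2 * c - \<mu> z" if "z < p" for z
    using anti that unfolding antisymmetric_about_uniform_def c_def by force
  have "(neg_mod p y = 1) = (y = p - 1)" "(neg_mod p y = p - 1) = (y = 1)" "p - 1 \<noteq> 1"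
    using y p by (auto simp: neg_mod_eq)
  then show "act p \<mu> (Q_delta p \<delta>) y - 1 / real p =
             - (act p \<mu> (Q_delta p \<delta>) (neg_mod p y) - 1 / real p)"
    using act_Q_delta[OF y p, of \<mu> \<delta>] act_Q_delta[OF ny p, of \<mu> \<delta>]
      pred_mod_neg_mod[OF y] succ_mod_neg_mod[OF y] reflect[OF nb(1)] reflect[OF nb(2)]
    unfolding c_def[symmetric] by (simp add: field_simps)
qed

lemma act_Q_delta_deviation_bounded:
  assumes anti: "antisymmetric_about_uniform p \<mu>" and bnd: "deviation_bounded p \<epsilon> \<mu>"
    and \<delta>: "\<bar>\<delta>\<bar> \<le> \<epsilon>" and p: "p \<ge> 3"
  shows "deviation_bounded p \<epsilon> (act p \<mu> (Q_delta p \<delta>))"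
  unfolding deviation_bounded_def
proof (intro allI impI)
  fix y assume y: "y < p"
  define c where "c = 1 / real p"
  define a where "a z = \<mu> z - c" for z
  have "c > 0" using p by (simp add: c_def)
  then have \<delta>c: "\<bar>\<delta> * c\<bar> \<le> \<epsilon> * c" using \<delta> by (simp add: abs_mult mult_right_mono)
  have a0: "a 0 = 0"
    using antisymmetric_about_uniform_at_0[OF anti] p by (simp add: a_def c_def)
  have "succ_mod p y < p" "pred_mod p y < p" using y p by (auto simp: succ_mod_eq pred_mod_eq)
  then have b: "\<bar>a (succ_mod p y)\<bar> \<le> 2 * \<epsilon> * c" "\<bar>a (pred_mod p y)\<bar> \<le> 2 * \<epsilon> * c"
    using bnd unfolding deviation_bounded_def a_def c_def by auto
  have \<nu>: "act p \<mu> (Q_delta p \<delta>) y - c = (a (pred_mod p y) + a (succ_mod p y)) / 2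
      + ((if y = 1 then \<delta> * c else 0) - (if y = p - 1 then \<delta> * c else 0))"
    using act_Q_delta[OF y p, of \<mu> \<delta>] a0 by (auto simp: a_def field_simps)
  consider "y = 1" | "y = p - 1" | "y \<noteq> 1" "y \<noteq> p - 1" by blast
  then have "\<bar>act p \<mu> (Q_delta p \<delta>) y - c\<bar> \<le> 2 * \<epsilon> * c"
  proof cases
    case 1
    then have "pred_mod p y = 0" "y \<noteq> p - 1" using p by (auto simp: pred_mod_eq)
    then show ?thesis using \<nu> 1 a0 b \<delta>c by (simp add: abs_if split: if_splits; linarith)
  next
    case 2
    then have "succ_mod p y = 0" "y \<noteq> 1" using p y by (auto simp: succ_mod_eq)
    then show ?thesis using \<nu> 2 a0 b \<delta>c by (simp add: abs_if split: if_splits; linarith)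
  next
    case 3
    then show ?thesis using \<nu> b by (simp add: abs_if split: if_splits; linarith)
  qed
  then show "\<bar>act p \<mu> (Q_delta p \<delta>) y - 1 / real p\<bar> \<le> 2 * \<epsilon> / real p"
    by (simp add: c_def)
qed

lemma evol_Qfam_invariant:
  assumes "antisymmetric_about_uniform p \<mu>0" "deviation_bounded p \<epsilon> \<mu>0" "p \<ge> 3"
    and Ks: "\<forall>i\<ge>1. Ks i \<in> Qfam p \<epsilon>"
  shows "antisymmetric_about_uniform p (evol p \<mu>0 Ks n) \<and>
         deviation_bounded p \<epsilon> (evol p \<mu>0 Ks n)"
proof (induction n)
  case 0
  then show ?case using assms by simp
next
  case (Suc n)
  obtain \<delta> where "Ks (Suc n) = Q_delta p \<delta>" "\<bar>\<delta>\<bar> \<le> \<epsilon>"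
    using Ks unfolding Qfam_def by fastforce
  then show ?case
    using Suc.IH act_Q_delta_antisymmetric act_Q_delta_deviation_bounded \<open>p \<ge> 3\<close> by simp
qed

lemma deviation_bounded_range:
  assumes "deviation_bounded p \<epsilon> \<mu>" "x < p"
  shows "(1 - 2 * \<epsilon>) / real p \<le> \<mu> x" "\<mu> x \<le> (1 + 2 * \<epsilon>) / real p"
  using assms unfolding deviation_bounded_def
  by (auto simp: diff_divide_distrib add_divide_distrib abs_le_iff)

lemma ratio_bounds_of_common_range:
  fixes lo hi s u v :: real
  assumes "0 < lo" "0 < s" "lo / s \<le> u" "u \<le> hi / s" "lo / s \<le> v" "v \<le> hi / s"
  shows "1 / (hi / lo) \<le> v / u \<and> v / u \<le> hi / lo"
proof -
  have "0 < lo / s" using assms by simp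
  then have "(lo / s) / (hi / s) \<le> v / u" "v / u \<le> (hi / s) / (lo / s)"
    using assms by (intro frac_le; linarith)+
  then show ?thesis using assms by simp
qed

theorem claim3p4:
  fixes p :: nat and \<epsilon> :: real and \<mu>0 :: "nat \<Rightarrow> real"
  assumes "0 < \<epsilon>" and "\<epsilon> < 1/2" and "p \<ge> 3"
    and "\<mu>0 \<in> S_N p \<epsilon>"
  shows "stable p ((1 + 2 * \<epsilon>) / (1 - 2 * \<epsilon>)) (Qfam p \<epsilon>) \<mu>0"
  unfolding stable_def
proof (intro allI impI)
  fix Ks :: "nat \<Rightarrow> kernel" and n x
  assume Ks: "\<forall>i\<ge>1. Ks i \<in> Qfam p \<epsilon>" and x: "x < p"
  have inv0: "antisymmetric_about_uniform p \<mu>0" "deviation_bounded p \<epsilon> \<mu>0"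
    using assms(4) by (simp_all add: S_N_iff)
  then have "deviation_bounded p \<epsilon> (evol p \<mu>0 Ks n)"
    using evol_Qfam_invariant[OF _ _ assms(3) Ks] by blast
  note ranges = deviation_bounded_range[OF inv0(2) x] deviation_bounded_range[OF this x]
  show "1 / ((1 + 2 * \<epsilon>) / (1 - 2 * \<epsilon>)) \<le> evol p \<mu>0 Ks n x / \<mu>0 x \<and>
        evol p \<mu>0 Ks n x / \<mu>0 x \<le> (1 + 2 * \<epsilon>) / (1 - 2 * \<epsilon>)"
    using assms(2,3) by (intro ratio_bounds_of_common_range[where s = "real p"] ranges) auto
qed

end
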